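(* Let $(A,f)$ be a finite-dimensional quadratic Lie algebra over a field $\mathbb{K}$ of characteristic zero, let $d$ be an $f$-skew-symmetric derivation of $A$, and let $(A_b,f_b)$ be the one-dimensional double extension of $(A,f)$ by $(b,d)$. Then $Z(A_b)=(Z(A)\cap\ker d)\oplus \mathbb{K}\beta$ if and only if $d$ is not an inner derivation of $A$. Otherwise $d=\mathrm{ad}\,x$ for some $x\in A$ and $Z(A_b)=(Z(A)\cap\ker d)\oplus\mathbb{K}\beta\oplus\mathbb{K}(b-x)$.
   Context: A quadratic Lie algebra $(A,f)$ is a Lie algebra with a non-degenerate symmetric bilinear form $f$ satisfying $f([x,y],z)+f(y,[x,z])=0$. A derivation $d$ is $f$-skew-symmetric if $f(d(x),y)+f(x,d(y))=0$ for all $x,y$. The one-dimensional double extension of $(A,f)$ by $(b,d)$ is the vector space $A_b=\mathbb{K}b\oplus A\oplus\mathbb{K}\beta$ with bracket $[\lambda b+a+\mu\beta,\lambda' b+a'+\mu'\beta]=\lambda d(a')-\lambda' d(a)+[a,a']_A+f(d(a),a')\beta$ ($\lambda,\lambda',\mu,\mu'\in\mathbb{K}$, $a,a'\in A$) and symmetric form $f_b(\lambda b+a+\mu\beta,\lambda' b+a'+\mu'\beta)=\lambda\mu'+\lambda'\mu+f(a,a')$. $Z(\cdot)$ denotes the centre. *)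

theory Defs
  imports Complex_Main "HOL-Library.Product_Plus"
begin

text \<open>A Lie algebra is the whole type 'v, a vector space over 'k via scalar multiplication s,
  with bracket br.\<close>

definition fin_dim :: "('k::field \<Rightarrow> 'v::ab_group_add \<Rightarrow> 'v) \<Rightarrow> bool" where
  "fin_dim s \<longleftrightarrow> (\<exists>B. finite B \<and> module.span s B = UNIV)"

definition lie_algebra :: "('k::field \<Rightarrow> 'v::ab_group_add \<Rightarrow> 'v) \<Rightarrow> ('v \<Rightarrow> 'v \<Rightarrow> 'v) \<Rightarrow> bool" where
  "lie_algebra s br \<longleftrightarrow> vector_space s
     \<and> (\<forall>x y z. br (x + y) z = br x z + br y z)
     \<and> (\<forall>x y z. br x (y + z) = br x y + br x z)
     \<and> (\<forall>c x y. br (s c x) y = s c (br x y))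
     \<and> (\<forall>c x y. br x (s c y) = s c (br x y))
     \<and> (\<forall>x. br x x = 0)
     \<and> (\<forall>x y z. br x (br y z) + br y (br z x) + br z (br x y) = 0)"

definition quadratic_lie_algebra ::
  "('k::field \<Rightarrow> 'v::ab_group_add \<Rightarrow> 'v) \<Rightarrow> ('v \<Rightarrow> 'v \<Rightarrow> 'v) \<Rightarrow> ('v \<Rightarrow> 'v \<Rightarrow> 'k) \<Rightarrow> bool" where
  "quadratic_lie_algebra s br f \<longleftrightarrow> lie_algebra s br
     \<and> (\<forall>x y z. f (x + y) z = f x z + f y z)
     \<and> (\<forall>c x y. f (s c x) y = c * f x y)
     \<and> (\<forall>x y. f x y = f y x)
     \<and> (\<forall>x. (\<forall>y. f x y = 0) \<longrightarrow> x = 0)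
     \<and> (\<forall>x y z. f (br x y) z + f y (br x z) = 0)"

definition derivation :: "('k::field \<Rightarrow> 'v::ab_group_add \<Rightarrow> 'v) \<Rightarrow> ('v \<Rightarrow> 'v \<Rightarrow> 'v) \<Rightarrow> ('v \<Rightarrow> 'v) \<Rightarrow> bool" where
  "derivation s br d \<longleftrightarrow> (\<forall>x y. d (x + y) = d x + d y) \<and> (\<forall>c x. d (s c x) = s c (d x))
     \<and> (\<forall>x y. d (br x y) = br (d x) y + br x (d y))"

definition skew_symmetric :: "('v \<Rightarrow> 'v \<Rightarrow> 'k::field) \<Rightarrow> ('v \<Rightarrow> 'v) \<Rightarrow> bool" where
  "skew_symmetric f d \<longleftrightarrow> (\<forall>x y. f (d x) y + f x (d y) = 0)"

definition ad :: "('v \<Rightarrow> 'v \<Rightarrow> 'v) \<Rightarrow> 'v \<Rightarrow> 'v \<Rightarrow> 'v" where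
  "ad br x = (\<lambda>y. br x y)"

definition inner_derivation :: "('v \<Rightarrow> 'v \<Rightarrow> 'v) \<Rightarrow> ('v \<Rightarrow> 'v) \<Rightarrow> bool" where
  "inner_derivation br d \<longleftrightarrow> (\<exists>x. d = ad br x)"

definition centre :: "('w \<Rightarrow> 'w \<Rightarrow> 'w::zero) \<Rightarrow> 'w set" where
  "centre br = {x. \<forall>y. br x y = 0}"

text \<open>Double extension A_b = K b + A + K beta, an element lambda b + a + mu beta
  represented as the triple (lambda, a, mu).\<close>

definition dext_br :: "('k::field \<Rightarrow> 'v::ab_group_add \<Rightarrow> 'v) \<Rightarrow> ('v \<Rightarrow> 'v \<Rightarrow> 'v) \<Rightarrow> ('v \<Rightarrow> 'v \<Rightarrow> 'k)
     \<Rightarrow> ('v \<Rightarrow> 'v) \<Rightarrow> 'k \<times> 'v \<times> 'k \<Rightarrow> 'k \<times> 'v \<times> 'k \<Rightarrow> 'k \<times> 'v \<times> 'k" where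
  "dext_br s br f d X Y = (case X of (l, a, m) \<Rightarrow> case Y of (l', a', m') \<Rightarrow>
      (0, s l (d a') - s l' (d a) + br a a', f (d a) a'))"

definition dext_form :: "('v \<Rightarrow> 'v \<Rightarrow> 'k::field) \<Rightarrow> 'k \<times> 'v \<times> 'k \<Rightarrow> 'k \<times> 'v \<times> 'k \<Rightarrow> 'k" where
  "dext_form f X Y = (case X of (l, a, m) \<Rightarrow> case Y of (l', a', m') \<Rightarrow> l * m' + l' * m + f a a')"

end

theory Submission
  imports Defs
begin

text \<open>By nondegeneracy of f, an element l b + a + m \<beta> of A_b is central iff d a = 0
  and l d + ad a = 0 on A. A central element with l \<noteq> 0 therefore exhibits d = ad (- a / l)
  as inner. Conversely, if d = ad x, then l b + a + m \<beta> is central iff a + l x lies in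
  Z(A) \<inter> ker d; in particular b - x is central but has a nonzero b-component.\<close>

lemma quadratic_lie_algebra_imp_lie_algebra: "quadratic_lie_algebra s br f \<Longrightarrow> lie_algebra s br"
  unfolding quadratic_lie_algebra_def by blast

lemma lie_algebra_imp_vector_space: "lie_algebra s br \<Longrightarrow> vector_space s"
  unfolding lie_algebra_def by blast

lemma lie_algebra_scale_left: "lie_algebra s br \<Longrightarrow> br (s c x) y = s c (br x y)"
  unfolding lie_algebra_def by blast

lemma lie_algebra_additive_left: "lie_algebra s br \<Longrightarrow> additive (\<lambda>x. br x y)"
  unfolding lie_algebra_def additive_def by blast

lemma derivation_additive: "derivation s br d \<Longrightarrow> additive d"
  unfolding derivation_def additive_def by blast

lemma derivation_scale: "derivation s br d \<Longrightarrow> d (s c x) = s c (d x)"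
  unfolding derivation_def by blast

lemma quadratic_lie_algebra_additive_form: "quadratic_lie_algebra s br f \<Longrightarrow> additive (\<lambda>x. f x y)"
  unfolding quadratic_lie_algebra_def additive_def by blast

lemma quadratic_lie_algebra_nondegenerate:
  "quadratic_lie_algebra s br f \<Longrightarrow> (\<And>y. f x y = 0) \<Longrightarrow> x = 0"
  unfolding quadratic_lie_algebra_def by blast

lemma centre_dext_br_iff:
  assumes q: "quadratic_lie_algebra s br f" and der: "derivation s br d"
  shows "(l, a, m) \<in> centre (dext_br s br f d) \<longleftrightarrow> d a = 0 \<and> (\<forall>a'. s l (d a') + br a a' = 0)"
proof -
  interpret vector_space s
    using lie_algebra_imp_vector_space[OF quadratic_lie_algebra_imp_lie_algebra[OF q]] .
  interpret form: additive "\<lambda>x. f x y" for y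
    using quadratic_lie_algebra_additive_form[OF q] .
  show ?thesis
  proof
    assume "(l, a, m) \<in> centre (dext_br s br f d)"
    then have central: "dext_br s br f d (l, a, m) (0, a', 0) = 0" for a'
      unfolding centre_def by blast
    have "f (d a) a' = 0" for a'
      using central[of a'] unfolding dext_br_def by (simp add: zero_prod_def)
    then have "d a = 0"
      using quadratic_lie_algebra_nondegenerate[OF q] by blast
    moreover have "s l (d a') + br a a' = 0" for a'
      using central[of a'] unfolding dext_br_def by (simp add: zero_prod_def)
    ultimately show "d a = 0 \<and> (\<forall>a'. s l (d a') + br a a' = 0)" by blast
  next
    assume "d a = 0 \<and> (\<forall>a'. s l (d a') + br a a' = 0)"
    then show "(l, a, m) \<in> centre (dext_br s br f d)"
      unfolding centre_def dext_br_def using form.zero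
      by (simp add: zero_prod_def split: prod.split)
  qed
qed

lemma derivation_eq_ad_if_central:
  assumes q: "quadratic_lie_algebra s br f" and der: "derivation s br d"
    and central: "(l, a, m) \<in> centre (dext_br s br f d)" and "l \<noteq> 0"
  shows "d = ad br (s (- inverse l) a)"
proof
  fix a'
  have lie: "lie_algebra s br"
    using quadratic_lie_algebra_imp_lie_algebra[OF q] .
  interpret vector_space s
    using lie_algebra_imp_vector_space[OF lie] .
  have "s l (d a') = - br a a'"
    using central centre_dext_br_iff[OF q der] by (simp add: eq_neg_iff_add_eq_0)
  then have "s (inverse l) (s l (d a')) = - s (inverse l) (br a a')"
    by simp
  then have "d a' = - s (inverse l) (br a a')"
    using \<open>l \<noteq> 0\<close> by simp
  then show "d a' = ad br (s (- inverse l) a) a'"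
    unfolding ad_def
    by (simp add: lie_algebra_scale_left[OF lie] additive.minus[OF lie_algebra_additive_left[OF lie]])
qed

lemma centre_dext_br_not_inner:
  assumes q: "quadratic_lie_algebra s br f" and der: "derivation s br d"
    and "\<not> inner_derivation br d"
  shows "centre (dext_br s br f d) = {(0, a, m) | a m. a \<in> centre br \<inter> {a. d a = 0}}"
proof -
  interpret vector_space s
    using lie_algebra_imp_vector_space[OF quadratic_lie_algebra_imp_lie_algebra[OF q]] .
  note central_iff = centre_dext_br_iff[OF q der]
  show ?thesis
  proof safe
    fix l a m
    assume central: "(l, a, m) \<in> centre (dext_br s br f d)"
    then have "l = 0"
      using derivation_eq_ad_if_central[OF q der central] assms(3)
      unfolding inner_derivation_def by blast
    with central show "\<exists>a' m'. (l, a, m) = (0, a', m') \<and> a' \<in> centre br \<inter> {a. d a = 0}"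
      using central_iff by (simp add: centre_def)
  next
    fix a m
    assume "a \<in> centre br" "d a = 0"
    then show "(0, a, m) \<in> centre (dext_br s br f d)"
      using central_iff by (simp add: centre_def)
  qed
qed

lemma centre_dext_br_ad:
  assumes q: "quadratic_lie_algebra s br f" and der: "derivation s br d"
    and d_ad: "d = ad br x"
  shows "centre (dext_br s br f d) = {(l, a - s l x, m) | l a m. a \<in> centre br \<inter> {a. d a = 0}}"
proof -
  have lie: "lie_algebra s br"
    using quadratic_lie_algebra_imp_lie_algebra[OF q] .
  interpret vector_space s
    using lie_algebra_imp_vector_space[OF lie] .
  interpret left: additive "\<lambda>x. br x y" for y
    using lie_algebra_additive_left[OF lie] .
  interpret d: additive d
    using derivation_additive[OF der] .
  have d_x: "d x = 0"
    using lie unfolding d_ad ad_def lie_algebra_def by blast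
  have central_iff: "(l, c, m) \<in> centre (dext_br s br f d)
      \<longleftrightarrow> c + s l x \<in> centre br \<inter> {a. d a = 0}" for l c m
  proof -
    have "s l (d y) + br c y = br (c + s l x) y" for y
      by (simp add: left.add lie_algebra_scale_left[OF lie] d_ad ad_def add.commute)
    moreover have "d (c + s l x) = d c"
      by (simp add: d.add derivation_scale[OF der] d_x)
    ultimately show ?thesis
      using centre_dext_br_iff[OF q der, of l c m] unfolding centre_def[of br] by auto
  qed
  show ?thesis
  proof safe
    fix l c m
    assume "(l, c, m) \<in> centre (dext_br s br f d)"
    then show "\<exists>l' a m'. (l, c, m) = (l', a - s l' x, m') \<and> a \<in> centre br \<inter> {a. d a = 0}"
      using central_iff by force
  next
    fix l a m
    assume "a \<in> centre br" "d a = 0"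
    then show "(l, a - s l x, m) \<in> centre (dext_br s br f d)"
      using central_iff by simp
  qed
qed

theorem lemma2p8:
  fixes s :: "'k::field_char_0 \<Rightarrow> 'v::ab_group_add \<Rightarrow> 'v"
    and br :: "'v \<Rightarrow> 'v \<Rightarrow> 'v" and f :: "'v \<Rightarrow> 'v \<Rightarrow> 'k" and d :: "'v \<Rightarrow> 'v"
  assumes "quadratic_lie_algebra s br f" and "fin_dim s"
    and "derivation s br d" and "skew_symmetric f d"
  shows "(centre (dext_br s br f d) = {(0, a, m) | a m. a \<in> centre br \<inter> {a. d a = 0}}
           \<longleftrightarrow> \<not> inner_derivation br d)
         \<and> (inner_derivation br d \<longrightarrow> (\<exists>x. d = ad br x \<and>
           centre (dext_br s br f d) = {(l, a - s l x, m) | l a m. a \<in> centre br \<inter> {a. d a = 0}}))"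
proof (cases "inner_derivation br d")
  case True
  then obtain x where d_ad: "d = ad br x"
    unfolding inner_derivation_def by blast
  note centre_eq = centre_dext_br_ad[OF assms(1,3) d_ad]
  have "0 \<in> centre br \<inter> {a. d a = 0}"
    using additive.zero[OF derivation_additive[OF assms(3)]]
      additive.zero[OF lie_algebra_additive_left[OF quadratic_lie_algebra_imp_lie_algebra[OF assms(1)]]]
    unfolding centre_def by blast
  then have "(1, 0 - s 1 x, 0) \<in> centre (dext_br s br f d)"
    unfolding centre_eq by blast
  then have "centre (dext_br s br f d) \<noteq> {(0, a, m) | a m. a \<in> centre br \<inter> {a. d a = 0}}"
    by auto
  with True d_ad centre_eq show ?thesis
    by (intro conjI impI exI[of _ x]) simp_all
next
  case False
  then show ?thesis
    using centre_dext_br_not_inner[OF assms(1,3)] by simp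
qed

end
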